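(* Let a finite concurrent system with processes $P=\{1,\dots,n\}$ and an error specification $(\langle p_1,E_1\rangle,\dots,\langle p_m,E_m\rangle)$ be given, as described in the context. If, for some invariant schema $A$, the Horn constraints (C1)–(C3) described in the context are solvable, then the system is safe.
   Context: A finite concurrent system consists of: a non-empty global state space $G$; the process set $P=\{1,\dots,n\}$; for each $p\in P$ a non-empty local state space $L_p$, a set of initial states $\mathit{Init}_p\subseteq G\times L_p$, and a transition relation $(g,l)\stackrel{p}{\to}(g',l')$ with $g,g'\in G$, $l,l'\in L_p$. The system state space is $S=G\times\prod_{p\in P}L_p$; for $s=(g,\bar l)$ write $\bar l[p]\in L_p$ for the component of process $p$, and $\bar l[p/l']$ for the vector with component $p$ replaced by $l'$. Initial system states are $S_0=\{(g,\bar l)\mid \forall p\in P.\,(g,\bar l[p])\in\mathit{Init}_p\}$. The system transition relation (interleaving) is: $(g,\bar l)\to(g',\bar l[p/l'])$ whenever $p\in P$ and $(g,\bar l[p])\stackrel{p}{\to}(g',l')$. An error specification is a vector $(\langle p_1,E_1\rangle,\dots,\langle p_m,E_m\rangle)$ with pairwise distinct $p_i\in P$ and $E_i\subseteq G\times L_{p_i}$; the error states are $\mathit{Err}=\{(g,\bar l)\in S\mid \forall i.\,(g,\bar l[p_i])\in E_i\}$. The system is safe if there is no finite sequence $s_0\to s_1\to\dots\to s_r$ with $s_0\in S_0$ and $s_r\in\mathit{Err}$. An invariant schema is an antichain $A\subseteq\{0,1\}^n$ with respect to the componentwise order on $\mathbb{N}^n$. For $\bar a\in A$ let $i_1<\dots<i_k$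 be the indices of its non-zero entries and write $\bar l[\bar a]=(\bar l[i_1],\dots,\bar l[i_k])$. For each $\bar a\in A$ there is a relation symbol $R_{\bar a}$ to be interpreted as a relation $R_{\bar a}\subseteq G\times L_{i_1}\times\dots\times L_{i_k}$. For $Q\subseteq P$ define $\mathit{Ctxt}(Q,g,\bar l)=\bigwedge\{R_{\bar c}(g,\bar l[\bar c])\mid \bar c\in A,\ \exists q\in Q.\ \bar c[q]>0\}$, where $\bar c[q]$ denotes the $q$-th entry of $\bar c$. The Horn constraints are (all variables universally quantified): (C1) for each $\bar a\in A$ (with non-zero indices $i_1<\dots<i_k$): $\mathit{Init}_{i_1}(g,l_1)\wedge\dots\wedge\mathit{Init}_{i_k}(g,l_k)\Rightarrow R_{\bar a}(g,l_1,\dots,l_k)$; (C2) for each $p\in P$ and $\bar a\in A$: $(g,\bar l[p])\stackrel{p}{\to}(g',l')\wedge R_{\bar a}(g,\bar l[\bar a])\wedge\mathit{Ctxt}(\{p\},g,\bar l)\Rightarrow R_{\bar a}(g',\bar l[p/l'][\bar a])$; (C3) $\bigwedge_{j=1}^m (g,\bar l[p_j])\in E_j\wedge \mathit{Ctxt}(\{p_1,\dots,p_m\},g,\bar l)\Rightarrow\mathit{false}$. The constraints are solvable if there is an interpretation of all $R_{\bar a}$ as set-theoretic relations making every constraint true. *)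

theory Defs
  imports "HOL-Library.FuncSet"
begin

text \<open>
All local states live in one type 'l;
process p has local state space L p. Global states have type 'g.
A system state is a pair (g, lv) with lv an extensional function on {1..n}
with lv p \<in> L p. The transition relation of process p is Trans p.
A 0/1 vector a over {1..n} is a function nat \<Rightarrow> nat in PiE {1..n} (\<lambda>_. {0,1}).
A tuple (l_{i1},...,l_{ik}) indexed by the non-zero positions of a is encoded
as an extensional function on the support of a; the relation R_a is R a.
\<close>

definition procs :: "nat \<Rightarrow> nat set" where
  "procs n = {1..n}"

definition sys_states :: "nat \<Rightarrow> 'g set \<Rightarrow> (nat \<Rightarrow> 'l set) \<Rightarrow> ('g \<times> (nat \<Rightarrow> 'l)) set" where
  "sys_states n G L = G \<times> PiE (procs n) L"

definition init_states ::
  "nat \<Rightarrow> 'g set \<Rightarrow> (nat \<Rightarrow> 'l set) \<Rightarrow> (nat \<Rightarrow> ('g \<times> 'l) set) \<Rightarrow> ('g \<times> (nat \<Rightarrow> 'l)) set" where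
  "init_states n G L Init = {(g, lv) \<in> sys_states n G L. \<forall>p\<in>procs n. (g, lv p) \<in> Init p}"

definition sys_step ::
  "nat \<Rightarrow> 'g set \<Rightarrow> (nat \<Rightarrow> 'l set) \<Rightarrow> (nat \<Rightarrow> 'g \<times> 'l \<Rightarrow> 'g \<times> 'l \<Rightarrow> bool)
   \<Rightarrow> 'g \<times> (nat \<Rightarrow> 'l) \<Rightarrow> 'g \<times> (nat \<Rightarrow> 'l) \<Rightarrow> bool" where
  "sys_step n G L Trans s s' \<longleftrightarrow>
     s \<in> sys_states n G L \<and>
     (\<exists>p\<in>procs n. \<exists>g' l'. Trans p (fst s, snd s p) (g', l') \<and> s' = (g', (snd s)(p := l')))"

definition err_states ::
  "nat \<Rightarrow> 'g set \<Rightarrow> (nat \<Rightarrow> 'l set) \<Rightarrow> (nat \<times> ('g \<times> 'l) set) list \<Rightarrow> ('g \<times> (nat \<Rightarrow> 'l)) set" where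
  "err_states n G L spec = {(g, lv) \<in> sys_states n G L. \<forall>(p, E) \<in> set spec. (g, lv p) \<in> E}"

definition safe ::
  "nat \<Rightarrow> 'g set \<Rightarrow> (nat \<Rightarrow> 'l set) \<Rightarrow> (nat \<Rightarrow> ('g \<times> 'l) set)
   \<Rightarrow> (nat \<Rightarrow> 'g \<times> 'l \<Rightarrow> 'g \<times> 'l \<Rightarrow> bool) \<Rightarrow> (nat \<times> ('g \<times> 'l) set) list \<Rightarrow> bool" where
  "safe n G L Init Trans spec \<longleftrightarrow>
     \<not> (\<exists>s0 sr. s0 \<in> init_states n G L Init \<and> (sys_step n G L Trans)\<^sup>*\<^sup>* s0 sr
               \<and> sr \<in> err_states n G L spec)"

definition conc_system ::
  "nat \<Rightarrow> 'g set \<Rightarrow> (nat \<Rightarrow> 'l set) \<Rightarrow> (nat \<Rightarrow> ('g \<times> 'l) set)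
   \<Rightarrow> (nat \<Rightarrow> 'g \<times> 'l \<Rightarrow> 'g \<times> 'l \<Rightarrow> bool) \<Rightarrow> bool" where
  "conc_system n G L Init Trans \<longleftrightarrow>
     finite G \<and> G \<noteq> {} \<and>
     (\<forall>p\<in>procs n. finite (L p) \<and> L p \<noteq> {} \<and> Init p \<subseteq> G \<times> L p \<and>
        (\<forall>g l g' l'. Trans p (g, l) (g', l') \<longrightarrow> g \<in> G \<and> l \<in> L p \<and> g' \<in> G \<and> l' \<in> L p))"

definition error_spec ::
  "nat \<Rightarrow> 'g set \<Rightarrow> (nat \<Rightarrow> 'l set) \<Rightarrow> (nat \<times> ('g \<times> 'l) set) list \<Rightarrow> bool" where
  "error_spec n G L spec \<longleftrightarrow>
     distinct (map fst spec) \<and> (\<forall>(p, E) \<in> set spec. p \<in> procs n \<and> E \<subseteq> G \<times> L p)"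

definition inv_schema :: "nat \<Rightarrow> (nat \<Rightarrow> nat) set \<Rightarrow> bool" where
  "inv_schema n A \<longleftrightarrow>
     A \<subseteq> PiE (procs n) (\<lambda>_. {0, 1}) \<and>
     (\<forall>a\<in>A. \<forall>b\<in>A. a \<le> b \<longrightarrow> a = b)"

definition supp_vec :: "nat \<Rightarrow> (nat \<Rightarrow> nat) \<Rightarrow> nat set" where
  "supp_vec n a = {i \<in> procs n. a i > 0}"

definition proj :: "nat \<Rightarrow> (nat \<Rightarrow> 'l) \<Rightarrow> (nat \<Rightarrow> nat) \<Rightarrow> (nat \<Rightarrow> 'l)" where
  "proj n lv a = restrict lv (supp_vec n a)"

definition Ctxt ::
  "nat \<Rightarrow> (nat \<Rightarrow> nat) set \<Rightarrow> ((nat \<Rightarrow> nat) \<Rightarrow> 'g \<Rightarrow> (nat \<Rightarrow> 'l) \<Rightarrow> bool)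
   \<Rightarrow> nat set \<Rightarrow> 'g \<Rightarrow> (nat \<Rightarrow> 'l) \<Rightarrow> bool" where
  "Ctxt n A R Q g lv \<longleftrightarrow> (\<forall>c\<in>A. (\<exists>q\<in>Q. c q > 0) \<longrightarrow> R c g (proj n lv c))"

definition C1 ::
  "nat \<Rightarrow> 'g set \<Rightarrow> (nat \<Rightarrow> 'l set) \<Rightarrow> (nat \<Rightarrow> ('g \<times> 'l) set) \<Rightarrow> (nat \<Rightarrow> nat) set
   \<Rightarrow> ((nat \<Rightarrow> nat) \<Rightarrow> 'g \<Rightarrow> (nat \<Rightarrow> 'l) \<Rightarrow> bool) \<Rightarrow> bool" where
  "C1 n G L Init A R \<longleftrightarrow>
     (\<forall>a\<in>A. \<forall>g\<in>G. \<forall>lt \<in> PiE (supp_vec n a) L.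
        (\<forall>i\<in>supp_vec n a. (g, lt i) \<in> Init i) \<longrightarrow> R a g lt)"

definition C2 ::
  "nat \<Rightarrow> 'g set \<Rightarrow> (nat \<Rightarrow> 'l set) \<Rightarrow> (nat \<Rightarrow> 'g \<times> 'l \<Rightarrow> 'g \<times> 'l \<Rightarrow> bool) \<Rightarrow> (nat \<Rightarrow> nat) set
   \<Rightarrow> ((nat \<Rightarrow> nat) \<Rightarrow> 'g \<Rightarrow> (nat \<Rightarrow> 'l) \<Rightarrow> bool) \<Rightarrow> bool" where
  "C2 n G L Trans A R \<longleftrightarrow>
     (\<forall>p\<in>procs n. \<forall>a\<in>A. \<forall>(g, lv) \<in> sys_states n G L. \<forall>g' l'.
        Trans p (g, lv p) (g', l') \<and> R a g (proj n lv a) \<and> Ctxt n A R {p} g lv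
        \<longrightarrow> R a g' (proj n (lv(p := l')) a))"

definition C3 ::
  "nat \<Rightarrow> 'g set \<Rightarrow> (nat \<Rightarrow> 'l set) \<Rightarrow> (nat \<times> ('g \<times> 'l) set) list \<Rightarrow> (nat \<Rightarrow> nat) set
   \<Rightarrow> ((nat \<Rightarrow> nat) \<Rightarrow> 'g \<Rightarrow> (nat \<Rightarrow> 'l) \<Rightarrow> bool) \<Rightarrow> bool" where
  "C3 n G L spec A R \<longleftrightarrow>
     (\<forall>(g, lv) \<in> sys_states n G L.
        \<not> ((\<forall>(p, E) \<in> set spec. (g, lv p) \<in> E) \<and> Ctxt n A R (set (map fst spec)) g lv))"

definition horn_solvable ::
  "nat \<Rightarrow> 'g set \<Rightarrow> (nat \<Rightarrow> 'l set) \<Rightarrow> (nat \<Rightarrow> ('g \<times> 'l) set)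
   \<Rightarrow> (nat \<Rightarrow> 'g \<times> 'l \<Rightarrow> 'g \<times> 'l \<Rightarrow> bool) \<Rightarrow> (nat \<times> ('g \<times> 'l) set) list
   \<Rightarrow> (nat \<Rightarrow> nat) set \<Rightarrow> bool" where
  "horn_solvable n G L Init Trans spec A \<longleftrightarrow>
     (\<exists>R. C1 n G L Init A R \<and> C2 n G L Trans A R \<and> C3 n G L spec A R)"

end

theory Submission
  imports Defs
begin

text \<open>
  A solution R of the Horn constraints yields an inductive invariant of the system: the set of
  states (g, l) with R_a(g, l[a]) for every a in A. (C1) says every initial state satisfies it,
  and (C2) says each transition preserves it, since the context Ctxt({p}, g, l) required by
  (C2) is itself part of the invariant. Every reachable state therefore satisfies the
  invariant, hence also Ctxt({p_1, ..., p_m}, g, l), and (C3) rules out that such a state is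
  an error state.
\<close>

definition schema_inv ::
  "nat \<Rightarrow> 'g set \<Rightarrow> (nat \<Rightarrow> 'l set) \<Rightarrow> (nat \<Rightarrow> nat) set
   \<Rightarrow> ((nat \<Rightarrow> nat) \<Rightarrow> 'g \<Rightarrow> (nat \<Rightarrow> 'l) \<Rightarrow> bool) \<Rightarrow> 'g \<times> (nat \<Rightarrow> 'l) \<Rightarrow> bool" where
  "schema_inv n G L A R s \<longleftrightarrow>
     s \<in> sys_states n G L \<and> (\<forall>a\<in>A. R a (fst s) (proj n (snd s) a))"

lemma proj_in_PiE:
  assumes "lv \<in> PiE (procs n) L"
  shows "proj n lv a \<in> PiE (supp_vec n a) L"
  using assms unfolding proj_def supp_vec_def by (auto simp: PiE_iff)

lemma schema_inv_Ctxt: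
  assumes "schema_inv n G L A R (g, lv)"
  shows "Ctxt n A R Q g lv"
  using assms unfolding schema_inv_def Ctxt_def by auto

lemma schema_inv_init:
  assumes "C1 n G L Init A R" and "s \<in> init_states n G L Init"
  shows "schema_inv n G L A R s"
proof -
  obtain g lv where s: "s = (g, lv)" and g: "g \<in> G" and lv: "lv \<in> PiE (procs n) L"
    and init: "\<forall>p\<in>procs n. (g, lv p) \<in> Init p"
    using assms(2) unfolding init_states_def sys_states_def by auto
  have "R a g (proj n lv a)" if "a \<in> A" for a
  proof -
    have "\<forall>i\<in>supp_vec n a. (g, proj n lv a i) \<in> Init i"
      using init unfolding proj_def supp_vec_def by auto
    then show ?thesis
      using assms(1) \<open>a \<in> A\<close> g proj_in_PiE[OF lv] unfolding C1_def by blast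
  qed
  then show ?thesis
    using s g lv unfolding schema_inv_def sys_states_def by auto
qed

lemma schema_inv_step:
  assumes trans_closed: "\<And>p g l g' l'. p \<in> procs n \<Longrightarrow> Trans p (g, l) (g', l') \<Longrightarrow> g' \<in> G \<and> l' \<in> L p"
    and "C2 n G L Trans A R"
    and "sys_step n G L Trans s s'"
    and inv: "schema_inv n G L A R s"
  shows "schema_inv n G L A R s'"
proof -
  obtain g lv where s: "s = (g, lv)" by (cases s)
  from assms(3) obtain p g' l' where p: "p \<in> procs n" and tr: "Trans p (g, lv p) (g', l')"
    and s': "s' = (g', lv(p := l'))" and state: "(g, lv) \<in> sys_states n G L"
    unfolding sys_step_def s by auto
  have "(g', lv(p := l')) \<in> sys_states n G L"
    using trans_closed[OF p tr] p state
    unfolding sys_states_def by (auto simp: PiE_iff extensional_def)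
  moreover have "R a g' (proj n (lv(p := l')) a)" if "a \<in> A" for a
  proof -
    have "R a g (proj n lv a)"
      using inv s \<open>a \<in> A\<close> unfolding schema_inv_def by auto
    moreover have "Ctxt n A R {p} g lv"
      using inv unfolding s by (rule schema_inv_Ctxt)
    ultimately show ?thesis
      using assms(2) p \<open>a \<in> A\<close> state tr unfolding C2_def by fast
  qed
  ultimately show ?thesis
    using s' unfolding schema_inv_def by auto
qed

lemma schema_inv_reachable:
  assumes "\<And>p g l g' l'. p \<in> procs n \<Longrightarrow> Trans p (g, l) (g', l') \<Longrightarrow> g' \<in> G \<and> l' \<in> L p"
    and "C2 n G L Trans A R"
    and "(sys_step n G L Trans)\<^sup>*\<^sup>* s s'"
    and "schema_inv n G L A R s"
  shows "schema_inv n G L A R s'"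
  using assms(3,4) by induction (auto intro: schema_inv_step[OF assms(1,2)])

lemma schema_inv_not_err:
  assumes "C3 n G L spec A R" and "schema_inv n G L A R s"
  shows "s \<notin> err_states n G L spec"
proof
  assume err: "s \<in> err_states n G L spec"
  obtain g lv where s: "s = (g, lv)" by (cases s)
  have "Ctxt n A R (set (map fst spec)) g lv"
    using assms(2) unfolding s by (rule schema_inv_Ctxt)
  then show False
    using assms(1) err s unfolding C3_def err_states_def by blast
qed

theorem lemma1:
  fixes n :: nat and G :: "'g set" and L :: "nat \<Rightarrow> 'l set"
    and Init :: "nat \<Rightarrow> ('g \<times> 'l) set"
    and Trans :: "nat \<Rightarrow> 'g \<times> 'l \<Rightarrow> 'g \<times> 'l \<Rightarrow> bool"
    and spec :: "(nat \<times> ('g \<times> 'l) set) list"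
    and A :: "(nat \<Rightarrow> nat) set"
  assumes "conc_system n G L Init Trans"
    and "error_spec n G L spec"
    and "inv_schema n A"
    and "horn_solvable n G L Init Trans spec A"
  shows "safe n G L Init Trans spec"
proof -
  obtain R where C1: "C1 n G L Init A R" and C2: "C2 n G L Trans A R" and C3: "C3 n G L spec A R"
    using assms(4) unfolding horn_solvable_def by blast
  have trans_closed: "g' \<in> G \<and> l' \<in> L p"
    if "p \<in> procs n" and "Trans p (g, l) (g', l')" for p g l g' l'
    using assms(1) that unfolding conc_system_def by blast
  show ?thesis
    unfolding safe_def
  proof clarify
    fix s0 sr
    assume init: "s0 \<in> init_states n G L Init" and reach: "(sys_step n G L Trans)\<^sup>*\<^sup>* s0 sr"
      and err: "sr \<in> err_states n G L spec"
    have "schema_inv n G L A R sr"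
      using schema_inv_reachable[OF _ C2 reach schema_inv_init[OF C1 init]] trans_closed by blast
    with err show False
      using schema_inv_not_err[OF C3] by blast
  qed
qed

end
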